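(* If a persistence module $\mathbb{V}$ contains a nonzero right-closed point, then $\mathbb{V}$ is not locally compact.
   Context: A persistence module is a functor $\mathbb{V}$ from the poset $[0,\infty)$ to $\mathbb{Q}$-vector spaces. An element $v_r\in\mathbb{V}(r)$ is a right-closed point if $\mathbb{V}(r\le r+\epsilon)(v_r)=0$ for all $\epsilon>0$. A persistence module is compact if it is a compact object of the category of persistence modules (equivalently a finite direct sum of interval modules $\mathbb{I}_{[s,t)}$, where $\mathbb{I}_{[s,t)}$ is $\mathbb{Q}$ on $[s,t)$ with identity structure maps and $0$ elsewhere). $\mathbb{V}$ is locally compact if every element $v\in\mathbb{V}(r)$ lies in some compact submodule of $\mathbb{V}$. *)

theory Defs
  imports Complex_Main "HOL-Library.Extended_Real"
begin

text \<open>A persistence module over [0,oo) with values in Q-vector spaces.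
  All spaces V(r) live inside one ambient type 'a (no loss of generality:
  take 'a to be the disjoint union of the spaces), each with its own
  carrier set and its own vector-space operations.  Only indices r \<ge> 0
  are constrained.\<close>

record 'a pmod =
  pm_car   :: "real \<Rightarrow> 'a set"
  pm_add   :: "real \<Rightarrow> 'a \<Rightarrow> 'a \<Rightarrow> 'a"
  pm_zero  :: "real \<Rightarrow> 'a"
  pm_smult :: "real \<Rightarrow> rat \<Rightarrow> 'a \<Rightarrow> 'a"
  pm_map   :: "real \<Rightarrow> real \<Rightarrow> 'a \<Rightarrow> 'a"

definition qvs :: "'a set \<Rightarrow> ('a \<Rightarrow> 'a \<Rightarrow> 'a) \<Rightarrow> 'a \<Rightarrow> (rat \<Rightarrow> 'a \<Rightarrow> 'a) \<Rightarrow> bool" where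
  "qvs C add z sm \<longleftrightarrow>
     z \<in> C \<and>
     (\<forall>x\<in>C. \<forall>y\<in>C. add x y \<in> C) \<and>
     (\<forall>a. \<forall>x\<in>C. sm a x \<in> C) \<and>
     (\<forall>x\<in>C. \<forall>y\<in>C. \<forall>w\<in>C. add (add x y) w = add x (add y w)) \<and>
     (\<forall>x\<in>C. \<forall>y\<in>C. add x y = add y x) \<and>
     (\<forall>x\<in>C. add z x = x) \<and>
     (\<forall>x\<in>C. \<exists>y\<in>C. add x y = z) \<and>
     (\<forall>a b. \<forall>x\<in>C. sm (a + b) x = add (sm a x) (sm b x)) \<and>
     (\<forall>a. \<forall>x\<in>C. \<forall>y\<in>C. sm a (add x y) = add (sm a x) (sm a y)) \<and>
     (\<forall>a b. \<forall>x\<in>C. sm (a * b) x = sm a (sm b x)) \<and>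
     (\<forall>x\<in>C. sm 1 x = x)"

definition is_pmod :: "'a pmod \<Rightarrow> bool" where
  "is_pmod V \<longleftrightarrow>
     (\<forall>r\<ge>0. qvs (pm_car V r) (pm_add V r) (pm_zero V r) (pm_smult V r)) \<and>
     (\<forall>r s. 0 \<le> r \<and> r \<le> s \<longrightarrow>
        (\<forall>x\<in>pm_car V r. pm_map V r s x \<in> pm_car V s) \<and>
        (\<forall>x\<in>pm_car V r. \<forall>y\<in>pm_car V r.
            pm_map V r s (pm_add V r x y) = pm_add V s (pm_map V r s x) (pm_map V r s y)) \<and>
        (\<forall>a. \<forall>x\<in>pm_car V r. pm_map V r s (pm_smult V r a x) = pm_smult V s a (pm_map V r s x))) \<and>
     (\<forall>r\<ge>0. \<forall>x\<in>pm_car V r. pm_map V r r x = x) \<and>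
     (\<forall>r s t. 0 \<le> r \<and> r \<le> s \<and> s \<le> t \<longrightarrow>
        (\<forall>x\<in>pm_car V r. pm_map V s t (pm_map V r s x) = pm_map V r t x))"

definition right_closed :: "'a pmod \<Rightarrow> real \<Rightarrow> 'a \<Rightarrow> bool" where
  "right_closed V r v \<longleftrightarrow>
     v \<in> pm_car V r \<and> (\<forall>\<epsilon>>0. pm_map V r (r + \<epsilon>) v = pm_zero V (r + \<epsilon>))"

definition is_submodule :: "'a pmod \<Rightarrow> (real \<Rightarrow> 'a set) \<Rightarrow> bool" where
  "is_submodule V W \<longleftrightarrow>
     (\<forall>r\<ge>0. W r \<subseteq> pm_car V r \<and> pm_zero V r \<in> W r \<and>
        (\<forall>x\<in>W r. \<forall>y\<in>W r. pm_add V r x y \<in> W r) \<and>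
        (\<forall>a. \<forall>x\<in>W r. pm_smult V r a x \<in> W r)) \<and>
     (\<forall>r s. 0 \<le> r \<and> r \<le> s \<longrightarrow> (\<forall>x\<in>W r. pm_map V r s x \<in> W s))"

text \<open>The finite direct sum of interval modules I_[s i, t i), i < n:
  at index r it is the space of rational vectors supported on the intervals
  active at r; structure maps kill the coordinates whose interval has ended.\<close>
definition isum_car :: "nat \<Rightarrow> (nat \<Rightarrow> real) \<Rightarrow> (nat \<Rightarrow> ereal) \<Rightarrow> real \<Rightarrow> (nat \<Rightarrow> rat) set" where
  "isum_car n s t r = {x. \<forall>i. x i \<noteq> 0 \<longrightarrow> i < n \<and> s i \<le> r \<and> ereal r < t i}"

definition isum_map :: "(nat \<Rightarrow> ereal) \<Rightarrow> real \<Rightarrow> (nat \<Rightarrow> rat) \<Rightarrow> (nat \<Rightarrow> rat)" where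
  "isum_map t r' x = (\<lambda>i. if ereal r' < t i then x i else 0)"

definition compact_submodule :: "'a pmod \<Rightarrow> (real \<Rightarrow> 'a set) \<Rightarrow> bool" where
  "compact_submodule V W \<longleftrightarrow> is_submodule V W \<and>
     (\<exists>n s t \<phi>. (\<forall>i<n. 0 \<le> s i \<and> ereal (s i) < t i) \<and>
        (\<forall>r\<ge>0. bij_betw (\<phi> r) (isum_car n s t r) (W r) \<and>
           (\<forall>x\<in>isum_car n s t r. \<forall>y\<in>isum_car n s t r. \<phi> r (\<lambda>i. x i + y i) = pm_add V r (\<phi> r x) (\<phi> r y)) \<and>
           (\<forall>a. \<forall>x\<in>isum_car n s t r. \<phi> r (\<lambda>i. a * x i) = pm_smult V r a (\<phi> r x))) \<and>
        (\<forall>r r'. 0 \<le> r \<and> r \<le> r' \<longrightarrow>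
           (\<forall>x\<in>isum_car n s t r. pm_map V r r' (\<phi> r x) = \<phi> r' (isum_map t r' x))))"

definition locally_compact :: "'a pmod \<Rightarrow> bool" where
  "locally_compact V \<longleftrightarrow>
     (\<forall>r\<ge>0. \<forall>v\<in>pm_car V r. \<exists>W. compact_submodule V W \<and> v \<in> W r)"

end

theory Submission
  imports Defs
begin

text \<open>The intervals \<open>[s, t)\<close> of an interval decomposition are open on the right, so a
  nonzero element of a compact module is still nonzero slightly later.  A right-closed
  point dies immediately, hence a nonzero one lies in no compact submodule.\<close>

lemma qvs_idempotent_eq_zero:
  assumes "qvs C add z sm" "u \<in> C" "add u u = u"
  shows "u = z"
proof -
  from assms(1) have zC: "z \<in> C"
    and assoc: "\<forall>x\<in>C. \<forall>y\<in>C. \<forall>w\<in>C. add (add x y) w = add x (add y w)"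
    and comm: "\<forall>x\<in>C. \<forall>y\<in>C. add x y = add y x"
    and left_zero: "\<forall>x\<in>C. add z x = x"
    and inverse: "\<forall>x\<in>C. \<exists>y\<in>C. add x y = z"
    unfolding qvs_def by auto
  obtain w where w: "w \<in> C" "add u w = z" using inverse assms(2) by blast
  have "z = add (add u u) w" using w assms(3) by simp
  also have "\<dots> = add u z" using assoc assms(2) w by simp
  also have "\<dots> = add z u" using comm assms(2) zC by simp
  also have "\<dots> = u" using left_zero assms(2) by simp
  finally show ?thesis by simp
qed

lemma zero_in_isum_car: "(\<lambda>_. 0) \<in> isum_car n s t r"
  unfolding isum_car_def by simp

lemma isum_map_in_isum_car:
  assumes "x \<in> isum_car n s t r" "r \<le> q"
  shows "isum_map t q x \<in> isum_car n s t q"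
  using assms unfolding isum_car_def isum_map_def by auto

lemma isum_map_nonzero_later:
  assumes "x \<in> isum_car n s t r" "x \<noteq> (\<lambda>_. 0)"
  obtains q where "r < q" "isum_map t q x \<noteq> (\<lambda>_. 0)"
proof -
  obtain i where xi: "x i \<noteq> 0" using assms(2) by auto
  then have "ereal r < t i" using assms(1) unfolding isum_car_def by blast
  then obtain q where q: "r < q" "ereal q < t i" using ereal_dense2 by fastforce
  then have "isum_map t q x i \<noteq> 0" using xi unfolding isum_map_def by simp
  then show ?thesis using that q(1) by fastforce
qed

lemma right_closed_map_later:
  assumes "right_closed V r v" "r < q"
  shows "pm_map V r q v = pm_zero V q"
proof -
  have "\<forall>\<epsilon>>0. pm_map V r (r + \<epsilon>) v = pm_zero V (r + \<epsilon>)"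
    using assms(1) unfolding right_closed_def by blast
  from this[rule_format, of "q - r"] show ?thesis
    using assms(2) by simp
qed

lemma compact_submoduleE:
  assumes "compact_submodule V W"
  obtains n s t \<phi> where "is_submodule V W"
    and "\<And>r. 0 \<le> r \<Longrightarrow> bij_betw (\<phi> r) (isum_car n s t r) (W r)"
    and "\<And>r x y. 0 \<le> r \<Longrightarrow> x \<in> isum_car n s t r \<Longrightarrow> y \<in> isum_car n s t r \<Longrightarrow>
           \<phi> r (\<lambda>i. x i + y i) = pm_add V r (\<phi> r x) (\<phi> r y)"
    and "\<And>r r' x. 0 \<le> r \<Longrightarrow> r \<le> r' \<Longrightarrow> x \<in> isum_car n s t r \<Longrightarrow>
           pm_map V r r' (\<phi> r x) = \<phi> r' (isum_map t r' x)"
  using assms unfolding compact_submodule_def by (elim conjE exE) (rule that, auto)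

lemma right_closed_in_compact_submodule:
  assumes "is_pmod V" "compact_submodule V W" "0 \<le> r"
    and "right_closed V r v" "v \<in> W r"
  shows "v = pm_zero V r"
proof (rule ccontr)
  assume v_nonzero: "v \<noteq> pm_zero V r"
  obtain n s t \<phi> where sub: "is_submodule V W"
    and bij: "\<And>r. 0 \<le> r \<Longrightarrow> bij_betw (\<phi> r) (isum_car n s t r) (W r)"
    and additive: "\<And>r x y. 0 \<le> r \<Longrightarrow> x \<in> isum_car n s t r \<Longrightarrow> y \<in> isum_car n s t r \<Longrightarrow>
           \<phi> r (\<lambda>i. x i + y i) = pm_add V r (\<phi> r x) (\<phi> r y)"
    and natural: "\<And>r r' x. 0 \<le> r \<Longrightarrow> r \<le> r' \<Longrightarrow> x \<in> isum_car n s t r \<Longrightarrow>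
           pm_map V r r' (\<phi> r x) = \<phi> r' (isum_map t r' x)"
    using assms(2) by (rule compact_submoduleE) (rule that)
  have \<phi>_zero: "\<phi> q (\<lambda>_. 0) = pm_zero V q" if "0 \<le> q" for q
  proof (rule qvs_idempotent_eq_zero)
    show "qvs (pm_car V q) (pm_add V q) (pm_zero V q) (pm_smult V q)"
      using assms(1) that unfolding is_pmod_def by blast
    have "\<phi> q (\<lambda>_. 0) \<in> W q"
      using bij[OF that] zero_in_isum_car by (auto simp: bij_betw_def)
    then show "\<phi> q (\<lambda>_. 0) \<in> pm_car V q"
      using sub that unfolding is_submodule_def by blast
    show "pm_add V q (\<phi> q (\<lambda>_. 0)) (\<phi> q (\<lambda>_. 0)) = \<phi> q (\<lambda>_. 0)"
      using additive[OF that zero_in_isum_car zero_in_isum_car] by simp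
  qed
  have "v \<in> \<phi> r ` isum_car n s t r"
    using bij[OF assms(3)] assms(5) by (simp add: bij_betw_def)
  then obtain x where x: "x \<in> isum_car n s t r" "\<phi> r x = v" by blast
  then have "x \<noteq> (\<lambda>_. 0)" using v_nonzero \<phi>_zero[OF assms(3)] by auto
  then obtain q where q: "r < q" "isum_map t q x \<noteq> (\<lambda>_. 0)"
    using isum_map_nonzero_later[OF x(1)] by blast
  have inj: "inj_on (\<phi> q) (isum_car n s t q)"
    using bij[of q] assms(3) q(1) by (simp add: bij_betw_def)
  have "\<phi> q (isum_map t q x) = pm_map V r q v"
    using natural[OF assms(3) _ x(1)] x(2) q(1) by simp
  also have "\<dots> = pm_zero V q"
    using right_closed_map_later[OF assms(4) q(1)] .
  also have "\<dots> = \<phi> q (\<lambda>_. 0)"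
    using \<phi>_zero assms(3) q(1) by simp
  finally have "isum_map t q x = (\<lambda>_. 0)"
    using isum_map_in_isum_car[OF x(1)] q(1) zero_in_isum_car
    by (intro inj_onD[OF inj]) auto
  then show False using q(2) by contradiction
qed

theorem mainTheorem17:
  fixes V :: "'a pmod" and r :: real and v :: 'a
  assumes "is_pmod V"
    and "0 \<le> r"
    and "right_closed V r v"
    and "v \<noteq> pm_zero V r"
  shows "\<not> locally_compact V"
proof
  assume "locally_compact V"
  then obtain W where "compact_submodule V W" "v \<in> W r"
    using assms(2,3) unfolding locally_compact_def right_closed_def by blast
  then have "v = pm_zero V r"
    by (rule right_closed_in_compact_submodule[OF assms(1) _ assms(2,3)])
  with assms(4) show False ..
qed

end
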